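(* Let $A$ be a unital power-associative algebra over a field $F$ (of any characteristic) which is algebraic, and let $R$ be a Rota–Baxter operator of weight zero on $A$. Then $R(1)$ is nilpotent.
   Context: A linear operator $R$ on $A$ is a Rota–Baxter operator of weight $0$ if $R(x)R(y)=R(R(x)y+xR(y))$ for all $x,y\in A$. Power-associative: every element generates an associative subalgebra. Algebraic: every element satisfies a nonzero polynomial equation over $F$. *)

theory Defs
  imports Main "HOL-Computational_Algebra.Polynomial"
begin

text \<open>A (not necessarily associative) algebra over a field 'f is modelled on the
  whole type 'a: 'a is an 'f-vector space via scal, and mul is an 'f-bilinear
  multiplication.\<close>

definition bilinear_mul :: "('f::field \<Rightarrow> 'a::ab_group_add \<Rightarrow> 'a) \<Rightarrow> ('a \<Rightarrow> 'a \<Rightarrow> 'a) \<Rightarrow> bool" where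
  "bilinear_mul scal mul \<longleftrightarrow>
     (\<forall>x y z. mul (x + y) z = mul x z + mul y z) \<and>
     (\<forall>x y z. mul x (y + z) = mul x y + mul x z) \<and>
     (\<forall>c x y. mul (scal c x) y = scal c (mul x y)) \<and>
     (\<forall>c x y. mul x (scal c y) = scal c (mul x y))"

definition unital_algebra ::
  "('f::field \<Rightarrow> 'a::ab_group_add \<Rightarrow> 'a) \<Rightarrow> ('a \<Rightarrow> 'a \<Rightarrow> 'a) \<Rightarrow> 'a \<Rightarrow> bool" where
  "unital_algebra scal mul e \<longleftrightarrow>
     vector_space scal \<and> bilinear_mul scal mul \<and> (\<forall>x. mul e x = x \<and> mul x e = x)"

inductive_set gen_subalg ::
  "('f::field \<Rightarrow> 'a::ab_group_add \<Rightarrow> 'a) \<Rightarrow> ('a \<Rightarrow> 'a \<Rightarrow> 'a) \<Rightarrow> 'a \<Rightarrow> 'a set"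
  for scal mul x where
  gen: "x \<in> gen_subalg scal mul x"
| zero: "0 \<in> gen_subalg scal mul x"
| add: "a \<in> gen_subalg scal mul x \<Longrightarrow> b \<in> gen_subalg scal mul x \<Longrightarrow> a + b \<in> gen_subalg scal mul x"
| scal: "a \<in> gen_subalg scal mul x \<Longrightarrow> scal c a \<in> gen_subalg scal mul x"
| mul: "a \<in> gen_subalg scal mul x \<Longrightarrow> b \<in> gen_subalg scal mul x \<Longrightarrow> mul a b \<in> gen_subalg scal mul x"

definition assoc_on :: "('a \<Rightarrow> 'a \<Rightarrow> 'a) \<Rightarrow> 'a set \<Rightarrow> bool" where
  "assoc_on mul S \<longleftrightarrow> (\<forall>a\<in>S. \<forall>b\<in>S. \<forall>c\<in>S. mul (mul a b) c = mul a (mul b c))"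

definition power_associative ::
  "('f::field \<Rightarrow> 'a::ab_group_add \<Rightarrow> 'a) \<Rightarrow> ('a \<Rightarrow> 'a \<Rightarrow> 'a) \<Rightarrow> bool" where
  "power_associative scal mul \<longleftrightarrow> (\<forall>x. assoc_on mul (gen_subalg scal mul x))"

primrec apow :: "('a \<Rightarrow> 'a \<Rightarrow> 'a) \<Rightarrow> 'a \<Rightarrow> 'a \<Rightarrow> nat \<Rightarrow> 'a" where
  "apow mul e x 0 = e"
| "apow mul e x (Suc n) = mul x (apow mul e x n)"

definition poly_eval ::
  "('f::field \<Rightarrow> 'a::ab_group_add \<Rightarrow> 'a) \<Rightarrow> ('a \<Rightarrow> 'a \<Rightarrow> 'a) \<Rightarrow> 'a \<Rightarrow> 'f poly \<Rightarrow> 'a \<Rightarrow> 'a" where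
  "poly_eval scal mul e p x = (\<Sum>i\<le>degree p. scal (coeff p i) (apow mul e x i))"

definition algebraic_algebra ::
  "('f::field \<Rightarrow> 'a::ab_group_add \<Rightarrow> 'a) \<Rightarrow> ('a \<Rightarrow> 'a \<Rightarrow> 'a) \<Rightarrow> 'a \<Rightarrow> bool" where
  "algebraic_algebra scal mul e \<longleftrightarrow> (\<forall>x. \<exists>p::'f poly. p \<noteq> 0 \<and> poly_eval scal mul e p x = 0)"

definition rota_baxter0 ::
  "('f::field \<Rightarrow> 'a::ab_group_add \<Rightarrow> 'a) \<Rightarrow> ('a \<Rightarrow> 'a \<Rightarrow> 'a) \<Rightarrow> ('a \<Rightarrow> 'a) \<Rightarrow> bool" where
  "rota_baxter0 scal mul R \<longleftrightarrow> Vector_Spaces.linear scal scal R \<and>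
     (\<forall>x y. mul (R x) (R y) = R (mul (R x) y + mul x (R y)))"

definition nilpotent_elem :: "('a::zero \<Rightarrow> 'a \<Rightarrow> 'a) \<Rightarrow> 'a \<Rightarrow> 'a \<Rightarrow> bool" where
  "nilpotent_elem mul e x \<longleftrightarrow> (\<exists>n>0. apow mul e x n = 0)"

end

theory Submission
  imports Defs
begin

text \<open>Write \<open>r = R 1\<close>. The Rota--Baxter identity for the pair \<open>R(n r^(n-1)) = r^n\<close>, \<open>R 1\<close>
  gives, by induction, \<open>(n + 1) R(r^n) = r^(n+1)\<close>; power-associativity is what lets
  \<open>r^n r = r^(n+1)\<close>. In characteristic \<open>p > 0\<close> this yields \<open>r^p = 0\<close> at once. In
  characteristic \<open>0\<close>, take a relation \<open>\<Sum>i\<le>d. a i r^i = 0\<close> with \<open>a d \<noteq> 0\<close> and apply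
  \<open>x \<mapsto> (d + 1) R x - r x\<close>: the result is the relation with coefficient
  \<open>a i (d - i) / (i + 1)\<close> at \<open>r^(i+1)\<close>, so the lowest nonzero coefficient moves up by one
  while the top index stays \<open>d\<close>. Iterating isolates a nonzero multiple of \<open>r^d\<close>, hence
  \<open>r^d = 0\<close>.\<close>

lemma apow_in_gen_subalg:
  assumes "\<And>x. mul x e = x" and "n \<ge> 1"
  shows "apow mul e x n \<in> gen_subalg scal mul x"
  using assms(2)
proof (induction n rule: dec_induct)
  case base
  show ?case using assms(1) by (simp add: gen_subalg.gen)
next
  case (step n)
  then show ?case by (simp add: gen_subalg.mul gen_subalg.gen)
qed

lemma apow_Suc_right:
  assumes "power_associative scal mul" and "\<And>x. mul e x = x" "\<And>x. mul x e = x"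
  shows "mul (apow mul e x n) x = apow mul e x (Suc n)"
proof (induction n)
  case 0
  show ?case using assms(2,3) by simp
next
  case (Suc n)
  show ?case
  proof (cases "n = 0")
    case True
    then show ?thesis using assms(3) by simp
  next
    case False
    have "apow mul e x n \<in> gen_subalg scal mul x" "x \<in> gen_subalg scal mul x"
      using False assms(3) by (simp_all add: apow_in_gen_subalg gen_subalg.gen)
    then have "mul (mul x (apow mul e x n)) x = mul x (mul (apow mul e x n) x)"
      using assms(1) unfolding power_associative_def assoc_on_def by blast
    then show ?thesis using Suc by simp
  qed
qed

lemma sum_atMost_Suc_shift_eq:
  fixes f :: "nat \<Rightarrow> 'b::comm_monoid_add"
  assumes "f 0 = 0" and "f (Suc d) = 0"
  shows "(\<Sum>i\<le>d. f (Suc i)) = (\<Sum>i\<le>d. f i)"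
  by (metis add.left_neutral add.right_neutral assms sum.atMost_Suc sum.atMost_Suc_shift)

definition shift_coeff :: "nat \<Rightarrow> (nat \<Rightarrow> 'f::field) \<Rightarrow> nat \<Rightarrow> 'f" where
  "shift_coeff d a i = (case i of 0 \<Rightarrow> 0 | Suc j \<Rightarrow> a j * of_nat (d - j) / of_nat (Suc j))"

lemma shift_coeff_Suc_times:
  fixes a :: "nat \<Rightarrow> 'f::field"
  assumes "of_nat (Suc i) \<noteq> (0::'f)" and "i \<le> d"
  shows "of_nat (Suc d) * (a i / of_nat (Suc i)) - a i = shift_coeff d a (Suc i)"
proof -
  have "of_nat (Suc d) * (a i / of_nat (Suc i)) - a i
      = a i * (of_nat (Suc d) - of_nat (Suc i)) / of_nat (Suc i)"
    using assms(1) by (simp add: field_simps)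
  also have "of_nat (Suc d) - of_nat (Suc i) = (of_nat (d - i) :: 'f)"
    using assms(2) by simp
  finally show ?thesis
    unfolding shift_coeff_def by simp
qed

lemma shift_coeff_Suc_neq_0:
  fixes a :: "nat \<Rightarrow> 'f::field"
  assumes "\<And>n. of_nat (Suc n) \<noteq> (0::'f)" and "a m \<noteq> 0" and "m < d"
  shows "shift_coeff d a (Suc m) \<noteq> 0"
proof -
  obtain k where "d - m = Suc k" using \<open>m < d\<close> by (metis Suc_diff_Suc)
  then show ?thesis
    using assms(1)[of k] assms(1)[of m] assms(2) unfolding shift_coeff_def by simp
qed

lemma shift_coeff_below:
  assumes "\<forall>i<m. a i = 0" and "i \<le> m"
  shows "shift_coeff d a i = 0"
  using assms by (cases i) (simp_all add: shift_coeff_def)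

locale rota_baxter0_algebra = Vector_Spaces.linear scal scal R
  for scal :: "'f::field \<Rightarrow> 'a::ab_group_add \<Rightarrow> 'a" and R +
  fixes mul :: "'a \<Rightarrow> 'a \<Rightarrow> 'a" and e :: 'a
  assumes bilinear: "bilinear_mul scal mul"
    and unit_left: "\<And>x. mul e x = x" and unit_right: "\<And>x. mul x e = x"
    and power_assoc: "power_associative scal mul"
    and rota_baxter: "\<And>x y. mul (R x) (R y) = R (mul (R x) y + mul x (R y))"
begin

abbreviation pow :: "'a \<Rightarrow> nat \<Rightarrow> 'a" where
  "pow \<equiv> apow mul e"

lemma mul_scale_left: "mul (scal c x) y = scal c (mul x y)"
  and mul_scale_right: "mul x (scal c y) = scal c (mul x y)"
  using bilinear unfolding bilinear_mul_def by blast+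

lemma additive_mul_right: "additive (mul x)"
  using bilinear by unfold_locales (simp add: bilinear_mul_def)

lemma mul_zero_right: "mul x 0 = 0"
  by (rule additive.zero[OF additive_mul_right])

lemma mul_sum_right: "mul x (sum g A) = (\<Sum>i\<in>A. mul x (g i))"
  by (rule additive.sum[OF additive_mul_right])

lemma pow_Suc_right: "mul (pow x n) x = pow x (Suc n)"
  using apow_Suc_right[OF power_assoc unit_left unit_right] .

lemma of_nat_scale_R_pow: "scal (of_nat (Suc n)) (R (pow (R e) n)) = pow (R e) (Suc n)"
proof (induction n)
  case 0
  show ?case by (simp add: unit_right)
next
  case (Suc n)
  let ?r = "R e" and ?c = "of_nat (Suc n) :: 'f"
  have R_x: "R (scal ?c (pow ?r n)) = pow ?r (Suc n)"
    using Suc by (simp add: scale)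
  have "pow ?r (Suc (Suc n)) = mul (R (scal ?c (pow ?r n))) ?r"
    by (simp only: R_x pow_Suc_right)
  also have "\<dots> = R (mul (R (scal ?c (pow ?r n))) e + mul (scal ?c (pow ?r n)) ?r)"
    by (rule rota_baxter)
  also have "\<dots> = R (pow ?r (Suc n) + scal ?c (pow ?r (Suc n)))"
    by (simp only: R_x unit_right mul_scale_left pow_Suc_right)
  also have "pow ?r (Suc n) + scal ?c (pow ?r (Suc n)) = scal (1 + ?c) (pow ?r (Suc n))"
    by (simp only: vs1.scale_left_distrib vs1.scale_one)
  finally show ?case by (simp add: scale add.commute)
qed

lemma R_pow:
  assumes "of_nat (Suc n) \<noteq> (0::'f)"
  shows "R (pow (R e) n) = scal (1 / of_nat (Suc n)) (pow (R e) (Suc n))"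
  using assms by (simp only: of_nat_scale_R_pow[symmetric] vs1.scale_scale) simp

lemma pow_R_unit_eq_0_if_of_nat_eq_0:
  "of_nat (Suc n) = (0::'f) \<Longrightarrow> pow (R e) (Suc n) = 0"
  by (metis of_nat_scale_R_pow vs1.scale_zero_left)

definition pow_comb :: "'a \<Rightarrow> nat \<Rightarrow> (nat \<Rightarrow> 'f) \<Rightarrow> 'a" where
  "pow_comb x d a = (\<Sum>i\<le>d. scal (a i) (pow x i))"

lemma pow_comb_shift_coeff:
  assumes char_0: "\<And>n. of_nat (Suc n) \<noteq> (0::'f)"
  shows "pow_comb (R e) d (shift_coeff d a)
    = scal (of_nat (Suc d)) (R (pow_comb (R e) d a)) - mul (R e) (pow_comb (R e) d a)"
proof -
  let ?r = "R e"
  have "scal (of_nat (Suc d)) (R (pow_comb ?r d a)) - mul ?r (pow_comb ?r d a)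
      = (\<Sum>i\<le>d. scal (of_nat (Suc d) * (a i / of_nat (Suc i)) - a i) (pow ?r (Suc i)))"
    unfolding pow_comb_def
    by (simp add: sum scale R_pow[OF char_0] mul_sum_right mul_scale_right
        vs1.scale_sum_right sum_subtractf vs1.scale_left_diff_distrib)
  also have "\<dots> = (\<Sum>i\<le>d. scal (shift_coeff d a (Suc i)) (pow ?r (Suc i)))"
    using shift_coeff_Suc_times[OF char_0] by (intro sum.cong) simp_all
  also have "\<dots> = pow_comb ?r d (shift_coeff d a)"
    unfolding pow_comb_def
    by (rule sum_atMost_Suc_shift_eq) (simp_all add: shift_coeff_def)
  finally show ?thesis ..
qed

lemma pow_comb_eq_0_imp_pow_eq_0:
  assumes char_0: "\<And>n. of_nat (Suc n) \<noteq> (0::'f)"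
    and "pow_comb (R e) d a = 0" and "a m \<noteq> 0" and "\<forall>i<m. a i = 0" and "m \<le> d"
  shows "pow (R e) d = 0"
  using assms(2-)
proof (induction "d - m" arbitrary: m a)
  case 0
  then have "m = d" by simp
  with 0 have "pow_comb (R e) d a = (\<Sum>i\<in>{d}. scal (a i) (pow (R e) i))"
    unfolding pow_comb_def by (intro sum.mono_neutral_right) auto
  with 0 \<open>m = d\<close> show ?case by simp
next
  case (Suc k)
  then have "m < d" by simp
  have "pow_comb (R e) d (shift_coeff d a) = 0"
    using Suc.prems(1) by (simp add: pow_comb_shift_coeff[OF char_0] zero mul_zero_right)
  moreover have "shift_coeff d a (Suc m) \<noteq> 0"
    using shift_coeff_Suc_neq_0[OF char_0] Suc.prems(2) \<open>m < d\<close> .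
  moreover have "\<forall>i<Suc m. shift_coeff d a i = 0"
    using shift_coeff_below[OF Suc.prems(3)] by (simp add: less_Suc_eq_le)
  ultimately show ?case
    using Suc.hyps(1)[of "Suc m"] Suc.hyps(2) \<open>m < d\<close> by (simp add: Suc_leI)
qed

lemma nilpotent_R_unit:
  assumes "p \<noteq> 0" and "poly_eval scal mul e p (R e) = 0"
  shows "nilpotent_elem mul e (R e)"
proof (cases "\<exists>n. of_nat (Suc n) = (0::'f)")
  case True
  then show ?thesis
    unfolding nilpotent_elem_def using pow_R_unit_eq_0_if_of_nat_eq_0 by blast
next
  case False
  obtain m where m: "coeff p m \<noteq> 0" "\<forall>i<m. coeff p i = 0"
    using exists_least_iff[of "\<lambda>i. coeff p i \<noteq> 0"] \<open>p \<noteq> 0\<close> by (metis leading_coeff_0_iff)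
  have "pow_comb (R e) (degree p) (coeff p) = 0"
    using assms(2) unfolding pow_comb_def poly_eval_def .
  then have "pow (R e) (degree p) = 0"
    using pow_comb_eq_0_imp_pow_eq_0 False m le_degree by blast
  then have "pow (R e) (Suc (degree p)) = 0"
    by (simp add: mul_zero_right)
  then show ?thesis
    unfolding nilpotent_elem_def by blast
qed

end

theorem lemma10:
  fixes scal :: "'f::field \<Rightarrow> 'a::ab_group_add \<Rightarrow> 'a"
    and mul :: "'a \<Rightarrow> 'a \<Rightarrow> 'a" and e :: 'a and R :: "'a \<Rightarrow> 'a"
  assumes "unital_algebra scal mul e"
    and "power_associative scal mul"
    and "algebraic_algebra scal mul e"
    and "rota_baxter0 scal mul R"
  shows "nilpotent_elem mul e (R e)"
proof -
  interpret rota_baxter0_algebra scal R mul e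
    using assms unfolding rota_baxter0_algebra_def rota_baxter0_algebra_axioms_def
      unital_algebra_def rota_baxter0_def by blast
  obtain p :: "'f poly" where "p \<noteq> 0" "poly_eval scal mul e p (R e) = 0"
    using assms(3) unfolding algebraic_algebra_def by blast
  then show ?thesis by (rule nilpotent_R_unit)
qed

end
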